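(* Let $\theta>0$, $\lambda>0$, $\mu>0$ with $\lambda<\mu+1$. For $\alpha\ge 0$, $d\ge 0$ let $$\pi(\alpha,d)=(\theta+\mu)\alpha-\frac{\alpha^2}{2}-\frac{\alpha}{\alpha+d}\,\lambda\alpha\theta-d ,$$ and for $\alpha>0$ let $\Pi(\alpha;\theta)=\max_{d\ge 0}\pi(\alpha,d)$. Then the optimal deployment $\alpha^*(\theta)$ maximizing $\Pi(\cdot;\theta)$ is $$\alpha^*(\theta)=\begin{cases}\mu+\theta(1-\lambda), & \lambda\theta\le 1,\\ \theta+\mu+1-2\sqrt{\lambda\theta}, & \lambda\theta>1,\end{cases}$$ with $\alpha^*(\theta)>0$ for all $\theta>0$. The two expressions coincide at $\theta=1/\lambda$.
   Context: $\alpha$ is AI deployment, $d$ security investment, $\theta$ AI capability, $\lambda$ conditional breach-loss magnitude, $\mu$ complementary organizational readiness. Breach probability is $p(\alpha,d)=\alpha/(\alpha+d)$ and breach damage is $\lambda\alpha\theta$. *)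

theory Defs
  imports Complex_Main
begin

definition profit :: "real \<Rightarrow> real \<Rightarrow> real \<Rightarrow> real \<Rightarrow> real \<Rightarrow> real" where
  "profit \<theta> lam \<mu> \<alpha> d =
     (\<theta> + \<mu>) * \<alpha> - \<alpha>^2 / 2 - (\<alpha> / (\<alpha> + d)) * (lam * \<alpha> * \<theta>) - d"

definition Profit :: "real \<Rightarrow> real \<Rightarrow> real \<Rightarrow> real \<Rightarrow> real" where
  "Profit \<theta> lam \<mu> \<alpha> = (SUP d\<in>{0..}. profit \<theta> lam \<mu> \<alpha> d)"

definition alpha_star :: "real \<Rightarrow> real \<Rightarrow> real \<Rightarrow> real" where
  "alpha_star \<theta> lam \<mu> =
     (if lam * \<theta> \<le> 1 then \<mu> + \<theta> * (1 - lam)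
      else \<theta> + \<mu> + 1 - 2 * sqrt (lam * \<theta>))"

end

theory Submission
  imports Defs
begin

(* For fixed deployment a, security investment d only enters through the cost
   a/(a+d) * k a + d with k = lam theta.  Its minimum over d >= 0 is linear in a:
   it is k a (at d = 0) when k <= 1, and (2 sqrt k - 1) a (at d = (sqrt k - 1) a,
   by AM-GM) when k > 1.  Hence Profit a = A a - a^2/2 with A = alpha_star, a concave
   parabola with unique maximiser A; and A > 0 because 2 sqrt (lam theta) <= lam + theta
   and lam < mu + 1. *)

definition breach_cost :: "real \<Rightarrow> real \<Rightarrow> real \<Rightarrow> real" where
  "breach_cost k \<alpha> d = \<alpha> / (\<alpha> + d) * (k * \<alpha>) + d"

lemma profit_eq_breach_cost:
  "profit \<theta> lam \<mu> \<alpha> d = (\<theta> + \<mu>) * \<alpha> - \<alpha>^2 / 2 - breach_cost (lam * \<theta>) \<alpha> d"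
  unfolding profit_def breach_cost_def by (simp add: algebra_simps)

lemma breach_cost_zero: "\<alpha> > 0 \<Longrightarrow> breach_cost k \<alpha> 0 = k * \<alpha>"
  unfolding breach_cost_def by simp

lemma breach_cost_ge_linear:
  fixes k \<alpha> d :: real
  assumes "\<alpha> > 0" "d \<ge> 0" "k \<le> 1"
  shows "k * \<alpha> \<le> breach_cost k \<alpha> d"
proof -
  have "k * \<alpha> \<le> \<alpha>" using assms mult_right_mono[of k 1 \<alpha>] by simp
  then have "0 \<le> d * (\<alpha> + d - k * \<alpha>)" using assms(2) by simp
  then have "k * \<alpha> * (\<alpha> + d) \<le> \<alpha> * (k * \<alpha>) + d * (\<alpha> + d)"
    by (simp add: algebra_simps)
  then show ?thesis
    using assms unfolding breach_cost_def by (simp add: field_simps)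
qed

lemma breach_cost_ge_sqrt:
  fixes k \<alpha> d :: real
  assumes "\<alpha> > 0" "d \<ge> 0" "k \<ge> 0"
  shows "(2 * sqrt k - 1) * \<alpha> \<le> breach_cost k \<alpha> d"
proof -
  have "0 \<le> (\<alpha> + d - sqrt k * \<alpha>)^2" by simp
  then have "2 * sqrt k * \<alpha> * (\<alpha> + d) \<le> (\<alpha> + d)^2 + k * \<alpha>^2"
    using assms(3) by (simp add: algebra_simps power2_eq_square)
  then show ?thesis
    using assms unfolding breach_cost_def by (simp add: field_simps power2_eq_square)
qed

lemma breach_cost_at_sqrt:
  fixes k \<alpha> :: real
  assumes "\<alpha> > 0" "k > 0"
  shows "breach_cost k \<alpha> ((sqrt k - 1) * \<alpha>) = (2 * sqrt k - 1) * \<alpha>"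
proof -
  have "\<alpha> / (\<alpha> + (sqrt k - 1) * \<alpha>) * (k * \<alpha>) = sqrt k * \<alpha>"
    using assms by (simp add: field_simps real_sqrt_mult_self flip: real_sqrt_mult)
  then show ?thesis unfolding breach_cost_def by (simp add: algebra_simps)
qed

lemma profit_max_over_security:
  fixes \<theta> lam \<mu> \<alpha> :: real
  assumes "\<theta> > 0" "lam > 0" "\<alpha> > 0"
  obtains d where "d \<ge> 0" "profit \<theta> lam \<mu> \<alpha> d = alpha_star \<theta> lam \<mu> * \<alpha> - \<alpha>^2 / 2"
    "\<And>d'. d' \<ge> 0 \<Longrightarrow> profit \<theta> lam \<mu> \<alpha> d' \<le> profit \<theta> lam \<mu> \<alpha> d"
proof (cases "lam * \<theta> \<le> 1")
  case True
  then have "alpha_star \<theta> lam \<mu> = \<theta> + \<mu> - lam * \<theta>"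
    unfolding alpha_star_def by (simp add: algebra_simps)
  show ?thesis
  proof (rule that[of 0])
    show "profit \<theta> lam \<mu> \<alpha> 0 = alpha_star \<theta> lam \<mu> * \<alpha> - \<alpha>^2 / 2"
      unfolding profit_eq_breach_cost breach_cost_zero[OF assms(3)] \<open>alpha_star \<theta> lam \<mu> = _\<close>
      by (simp add: algebra_simps)
    show "profit \<theta> lam \<mu> \<alpha> d' \<le> profit \<theta> lam \<mu> \<alpha> 0" if "d' \<ge> 0" for d'
      using breach_cost_ge_linear[OF assms(3) that True] assms
      by (simp add: profit_eq_breach_cost breach_cost_zero)
  qed simp
next
  case False
  then have "alpha_star \<theta> lam \<mu> = \<theta> + \<mu> - (2 * sqrt (lam * \<theta>) - 1)"
    unfolding alpha_star_def by simp
  have "sqrt (lam * \<theta>) \<ge> 1" "lam * \<theta> > 0" using False assms by simp_all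
  show ?thesis
  proof (rule that[of "(sqrt (lam * \<theta>) - 1) * \<alpha>"])
    show "profit \<theta> lam \<mu> \<alpha> ((sqrt (lam * \<theta>) - 1) * \<alpha>) = alpha_star \<theta> lam \<mu> * \<alpha> - \<alpha>^2 / 2"
      unfolding profit_eq_breach_cost breach_cost_at_sqrt[OF assms(3) \<open>lam * \<theta> > 0\<close>]
        \<open>alpha_star \<theta> lam \<mu> = _\<close>
      by (simp add: algebra_simps)
    show "profit \<theta> lam \<mu> \<alpha> d' \<le> profit \<theta> lam \<mu> \<alpha> ((sqrt (lam * \<theta>) - 1) * \<alpha>)"
      if "d' \<ge> 0" for d'
      using breach_cost_ge_sqrt[OF assms(3) that, of "lam * \<theta>"] assms
      by (simp add: profit_eq_breach_cost breach_cost_at_sqrt)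
  qed (use \<open>sqrt (lam * \<theta>) \<ge> 1\<close> assms in simp)
qed

lemma Profit_eq_quadratic:
  fixes \<theta> lam \<mu> \<alpha> :: real
  assumes "\<theta> > 0" "lam > 0" "\<alpha> > 0"
  shows "Profit \<theta> lam \<mu> \<alpha> = alpha_star \<theta> lam \<mu> * \<alpha> - \<alpha>^2 / 2"
proof -
  obtain d where "d \<ge> 0" "profit \<theta> lam \<mu> \<alpha> d = alpha_star \<theta> lam \<mu> * \<alpha> - \<alpha>^2 / 2"
    "\<And>d'. d' \<ge> 0 \<Longrightarrow> profit \<theta> lam \<mu> \<alpha> d' \<le> profit \<theta> lam \<mu> \<alpha> d"
    using profit_max_over_security[OF assms] by blast
  then show ?thesis
    unfolding Profit_def by (intro cSup_eq_maximum) (auto intro: rev_image_eqI[of d])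
qed

lemma alpha_star_pos:
  fixes \<theta> lam \<mu> :: real
  assumes "\<theta> > 0" "lam > 0" "\<mu> > 0" "lam < \<mu> + 1"
  shows "alpha_star \<theta> lam \<mu> > 0"
proof (cases "lam * \<theta> \<le> 1")
  case True
  have "\<theta> * (lam - 1) < \<mu>"
  proof (cases "lam \<le> 1")
    case True
    then have "\<theta> * (lam - 1) \<le> 0" using assms by (simp add: mult_nonneg_nonpos)
    then show ?thesis using assms by simp
  next
    case False
    then have "\<theta> < lam * \<theta>" using assms by simp
    then have "\<theta> < 1" using \<open>lam * \<theta> \<le> 1\<close> by linarith
    then have "\<theta> * (lam - 1) < lam - 1" using False by simp
    then show ?thesis using assms by simp
  qed
  then show ?thesis using True unfolding alpha_star_def by (simp add: algebra_simps)
next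
  case False
  have "sqrt (lam * \<theta>) \<le> (lam + \<theta>) / 2"
    using assms by (intro arith_geo_mean_sqrt) auto
  then show ?thesis using False assms unfolding alpha_star_def by simp
qed

theorem proposition1:
  fixes \<theta> lam \<mu> :: real
  assumes "\<theta> > 0" and "lam > 0" and "\<mu> > 0" and "lam < \<mu> + 1"
  shows "alpha_star \<theta> lam \<mu> > 0
    \<and> (\<forall>\<alpha>>0. Profit \<theta> lam \<mu> \<alpha> \<le> Profit \<theta> lam \<mu> (alpha_star \<theta> lam \<mu>))
    \<and> (\<forall>\<alpha>>0. Profit \<theta> lam \<mu> \<alpha> = Profit \<theta> lam \<mu> (alpha_star \<theta> lam \<mu>) \<longrightarrow> \<alpha> = alpha_star \<theta> lam \<mu>)
    \<and> (\<forall>\<alpha>>0. \<exists>d\<ge>0. Profit \<theta> lam \<mu> \<alpha> = profit \<theta> lam \<mu> \<alpha> d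
                      \<and> (\<forall>d'\<ge>0. profit \<theta> lam \<mu> \<alpha> d' \<le> profit \<theta> lam \<mu> \<alpha> d))
    \<and> \<mu> + (1 / lam) * (1 - lam) = 1 / lam + \<mu> + 1 - 2 * sqrt (lam * (1 / lam))"
proof -
  define A where "A = alpha_star \<theta> lam \<mu>"
  have "A > 0" unfolding A_def using alpha_star_pos[OF assms] .
  have gap: "Profit \<theta> lam \<mu> A - Profit \<theta> lam \<mu> \<alpha> = (\<alpha> - A)^2 / 2" if "\<alpha> > 0" for \<alpha>
    using Profit_eq_quadratic[OF assms(1,2) that, of \<mu>] Profit_eq_quadratic[OF assms(1,2) \<open>A > 0\<close>, of \<mu>]
    unfolding A_def
    by (simp add: power2_eq_square field_simps)
  have "\<exists>d\<ge>0. Profit \<theta> lam \<mu> \<alpha> = profit \<theta> lam \<mu> \<alpha> d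
          \<and> (\<forall>d'\<ge>0. profit \<theta> lam \<mu> \<alpha> d' \<le> profit \<theta> lam \<mu> \<alpha> d)" if "\<alpha> > 0" for \<alpha>
    using profit_max_over_security[OF assms(1,2) that] Profit_eq_quadratic[OF assms(1,2) that] by metis
  moreover have "\<mu> + (1 / lam) * (1 - lam) = 1 / lam + \<mu> + 1 - 2 * sqrt (lam * (1 / lam))"
    using assms by (simp add: field_simps)
  moreover have "Profit \<theta> lam \<mu> \<alpha> \<le> Profit \<theta> lam \<mu> A" if "\<alpha> > 0" for \<alpha>
    using gap[OF that] zero_le_power2[of "\<alpha> - A"] by linarith
  moreover have "\<alpha> = A" if "\<alpha> > 0" "Profit \<theta> lam \<mu> \<alpha> = Profit \<theta> lam \<mu> A" for \<alpha>
    using gap[OF that(1)] that(2) by simp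
  ultimately show ?thesis
    using \<open>A > 0\<close> unfolding A_def by blast
qed

end
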